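(* In any execution of temporal BFS on a temporal graph $G=(V,E)$ from source $s$ with starting time $t_s$, at every moment the queue $Q$ contains at most two records whose vertex is any given $v\in V$.
   Context: A temporal graph is a pair $G=(V,E)$ where $V$ is a finite set of vertices and $E$ is a finite set of temporal edges, i.e. triples $(u,v,t)$ with $u,v\in V$, $u\neq v$, $t\in\mathbb{R}$ (the time at which the edge is active); distinct elements of $E$ are distinct triples. Fix $t_s\in\mathbb{R}$ and $s\in V$. Temporal BFS. Records are tuples $(x,d,\tau,p)$ (vertex $x$, level $d$, time $\tau$, predecessor record $p$ or none); every record ever created is an occurrence (node) of the BFS tree $T$, rooted at the initial record, with a tree edge from the predecessor record to the record; the level and time of an occurrence are the final values of its fields. For each $x\in V$ a current value $\sigma(x)$ is kept, initially $\infty$, and set to $\tau$ whenever a record of $x$ is created or its time is updated to $\tau$. Initially the FIFO queue $Q$ contains only $(s,0,t_s,\text{none})$ and $\sigma(s)=t_s$; no edge is traversed. While $Q\neq\emptyset$: pop the front record $R=(u,d_u,\sigma_u,p_u)$; let $B$ be the set of edges $(u,v,t)\in E$ not yet traversed with $\sigma_u\le t$; for each vertex $v$ such that $B$ contains an edge to $v$ (in any order), let $e=(u,v,t)$ be the edge of $B$ to $v$ with smallest $t$, mark $e$ traversed, and: (i) if $Q$ contains no record of $v$ and $\sigma(v)>t$, create $(v,d_u+1,t,R)$ and append it to $Q$; (ii) if $Q$ contains a record of $v$ with level $d_u+1$ and $\sigma(v)>t$, set that record's time to $t$ and predecessor to $R$; (iii) if $Q$ contains a record of $v$ but none with level $d_u+1$,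 and $\sigma(v)>t$, create $(v,d_u+1,t,R)$ and append it to $Q$. *)

theory Defs
  imports Main "HOL-Library.Extended_Real"
begin

type_synonym 'v tedge = "'v \<times> 'v \<times> real"

definition temporal_graph :: "'v set \<Rightarrow> 'v tedge set \<Rightarrow> bool" where
  "temporal_graph V E \<longleftrightarrow> finite V \<and> finite E \<and>
     (\<forall>(u,v,t)\<in>E. u \<in> V \<and> v \<in> V \<and> u \<noteq> v)"

text \<open>BFS records (x, d, tau, p). Each record carries a unique identifier so that
  the predecessor field can refer to a record (a node of the BFS tree).\<close>
datatype 'v brec = BRec (rid: nat) (rvx: 'v) (rlev: nat) (rtime: real) (rpred: "nat option")

text \<open>Algorithm state: queue, current values sigma (\<infinity> = not yet set), traversed edges,
  fresh identifier counter, and the record currently being processed together with the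
  part of its edge set B whose target vertices have not yet been handled.\<close>
record 'v bstate =
  queue :: "'v brec list"
  sig :: "'v \<Rightarrow> ereal"
  trav :: "'v tedge set"
  nxt :: nat
  cur :: "('v brec \<times> 'v tedge set) option"

definition bfs_init :: "'v \<Rightarrow> real \<Rightarrow> 'v bstate" where
  "bfs_init s ts = \<lparr> queue = [BRec 0 s 0 ts None],
                     sig = (\<lambda>_. \<infinity>)(s := ereal ts),
                     trav = {}, nxt = 1, cur = None \<rparr>"

text \<open>Small steps of temporal BFS. Every state between two steps is a "moment".\<close>
inductive bfs_step :: "'v tedge set \<Rightarrow> 'v bstate \<Rightarrow> 'v bstate \<Rightarrow> bool" for E where
  pop: "cur st = None \<Longrightarrow> queue st = R # rest \<Longrightarrow>
        B = {(a,b,t) \<in> E. (a,b,t) \<notin> trav st \<and> a = rvx R \<and> rtime R \<le> t} \<Longrightarrow>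
        bfs_step E st (st\<lparr> queue := rest, cur := Some (R, B) \<rparr>)"
| finish: "cur st = Some (R, {}) \<Longrightarrow> bfs_step E st (st\<lparr> cur := None \<rparr>)"
| new_i: "cur st = Some (R, B) \<Longrightarrow> (u,v,t) \<in> B \<Longrightarrow>
        (\<forall>(a,b,t')\<in>B. b = v \<longrightarrow> t \<le> t') \<Longrightarrow>
        (\<forall>r\<in>set (queue st). rvx r \<noteq> v) \<Longrightarrow> sig st v > ereal t \<Longrightarrow>
        bfs_step E st (st\<lparr> queue := queue st @ [BRec (nxt st) v (Suc (rlev R)) t (Some (rid R))],
                         sig := (sig st)(v := ereal t),
                         trav := insert (u,v,t) (trav st),
                         nxt := Suc (nxt st),
                         cur := Some (R, {(a,b,t')\<in>B. b \<noteq> v}) \<rparr>)"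
| update_ii: "cur st = Some (R, B) \<Longrightarrow> (u,v,t) \<in> B \<Longrightarrow>
        (\<forall>(a,b,t')\<in>B. b = v \<longrightarrow> t \<le> t') \<Longrightarrow>
        i < length (queue st) \<Longrightarrow> rvx (queue st ! i) = v \<Longrightarrow>
        rlev (queue st ! i) = Suc (rlev R) \<Longrightarrow> sig st v > ereal t \<Longrightarrow>
        bfs_step E st (st\<lparr> queue := (queue st)[i := BRec (rid (queue st ! i)) v (Suc (rlev R)) t (Some (rid R))],
                         sig := (sig st)(v := ereal t),
                         trav := insert (u,v,t) (trav st),
                         cur := Some (R, {(a,b,t')\<in>B. b \<noteq> v}) \<rparr>)"
| new_iii: "cur st = Some (R, B) \<Longrightarrow> (u,v,t) \<in> B \<Longrightarrow>
        (\<forall>(a,b,t')\<in>B. b = v \<longrightarrow> t \<le> t') \<Longrightarrow>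
        (\<exists>r\<in>set (queue st). rvx r = v) \<Longrightarrow>
        (\<forall>r\<in>set (queue st). rvx r = v \<longrightarrow> rlev r \<noteq> Suc (rlev R)) \<Longrightarrow>
        sig st v > ereal t \<Longrightarrow>
        bfs_step E st (st\<lparr> queue := queue st @ [BRec (nxt st) v (Suc (rlev R)) t (Some (rid R))],
                         sig := (sig st)(v := ereal t),
                         trav := insert (u,v,t) (trav st),
                         nxt := Suc (nxt st),
                         cur := Some (R, {(a,b,t')\<in>B. b \<noteq> v}) \<rparr>)"
| skip: "cur st = Some (R, B) \<Longrightarrow> (u,v,t) \<in> B \<Longrightarrow>
        (\<forall>(a,b,t')\<in>B. b = v \<longrightarrow> t \<le> t') \<Longrightarrow>
        \<not> sig st v > ereal t \<Longrightarrow>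
        bfs_step E st (st\<lparr> trav := insert (u,v,t) (trav st),
                         cur := Some (R, {(a,b,t')\<in>B. b \<noteq> v}) \<rparr>)"

end

theory Submission
  imports Defs
begin

text \<open>The levels of the records in the queue are sorted and span at most two consecutive
  values d and d+1: while a record of level d is being processed only records of level d+1
  are added. Moreover no two queued records share both vertex and level, since case (ii)
  updates an existing record of the new level instead of adding one and case (iii) only
  fires when no such record exists. Hence each vertex occurs at most twice.\<close>

text \<open>Sortedness is what keeps the level window when the front record is popped.\<close>

definition bfs_inv :: "'v bstate \<Rightarrow> bool" where
  "bfs_inv st \<longleftrightarrow>
     sorted (map rlev (queue st)) \<and>
     distinct (map (\<lambda>r. (rvx r, rlev r)) (queue st)) \<and>
     (case cur st of
        None \<Rightarrow> (\<forall>r\<in>set (queue st). \<forall>r'\<in>set (queue st). rlev r' \<le> Suc (rlev r))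
      | Some (R, B) \<Rightarrow> (\<forall>r\<in>set (queue st). rlev R \<le> rlev r \<and> rlev r \<le> Suc (rlev R)))"

lemma bfs_inv_init: "bfs_inv (bfs_init s ts)"
  by (simp add: bfs_inv_def bfs_init_def)

lemma map_list_update_same:
  assumes "i < length xs" "f x = f (xs ! i)"
  shows "map f (xs[i := x]) = map f xs"
  using assms by (metis list_update_id map_update)

lemma bfs_inv_step:
  assumes "bfs_step E st st'" "bfs_inv st"
  shows "bfs_inv st'"
  using assms(1)
proof cases
  case (pop R rest B)
  then show ?thesis using assms(2) by (auto simp: bfs_inv_def)
next
  case (finish R)
  then have "\<forall>r\<in>set (queue st). rlev R \<le> rlev r \<and> rlev r \<le> Suc (rlev R)"
    using assms(2) by (auto simp: bfs_inv_def)
  then have "\<forall>r\<in>set (queue st). \<forall>r'\<in>set (queue st). rlev r' \<le> Suc (rlev r)"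
    by (meson le_trans Suc_le_mono)
  then show ?thesis using finish assms(2) by (simp add: bfs_inv_def)
next
  case (new_i R B u v t)
  then show ?thesis using assms(2) by (auto simp: bfs_inv_def sorted_append)
next
  case (update_ii R B u v t i)
  let ?x = "BRec (rid (queue st ! i)) v (Suc (rlev R)) t (Some (rid R))"
  have levels: "map rlev ((queue st)[i := ?x]) = map rlev (queue st)"
    using update_ii by (intro map_list_update_same) auto
  have keys: "map (\<lambda>r. (rvx r, rlev r)) ((queue st)[i := ?x]) = map (\<lambda>r. (rvx r, rlev r)) (queue st)"
    using update_ii by (intro map_list_update_same) auto
  have "rlev R \<le> rlev r \<and> rlev r \<le> Suc (rlev R)" if "r \<in> set ((queue st)[i := ?x])" for r
    using that set_update_subset_insert assms(2) update_ii by (fastforce simp: bfs_inv_def)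
  then show ?thesis using assms(2) update_ii levels keys by (auto simp: bfs_inv_def)
next
  case (new_iii R B u v t)
  then show ?thesis using assms(2) by (auto simp: bfs_inv_def sorted_append)
next
  case (skip R B u v t)
  then show ?thesis using assms(2) by (auto simp: bfs_inv_def)
qed

lemma bfs_inv_reachable:
  "(bfs_step E)\<^sup>*\<^sup>* (bfs_init s ts) st \<Longrightarrow> bfs_inv st"
  by (induction rule: rtranclp_induct) (auto intro: bfs_inv_init bfs_inv_step)

lemma bfs_inv_two_levels:
  assumes "bfs_inv st"
  obtains d where "\<forall>r\<in>set (queue st). rlev r = d \<or> rlev r = Suc d"
proof -
  have "\<exists>d. \<forall>r\<in>set (queue st). d \<le> rlev r \<and> rlev r \<le> Suc d"
  proof (cases "cur st")
    case None
    then show ?thesis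
      using assms by (cases "queue st") (auto simp: bfs_inv_def)
  next
    case (Some p)
    then show ?thesis
      using assms by (cases p) (auto simp: bfs_inv_def)
  qed
  then show ?thesis using that by (metis le_SucE le_antisym)
qed

lemma length_filter_le_card:
  assumes "distinct (map h xs)" "\<forall>x\<in>set xs. P x \<longrightarrow> h x \<in> A" "finite A"
  shows "length (filter P xs) \<le> card A"
proof -
  have "length (filter P xs) = card (h ` set (filter P xs))"
    using assms(1) distinct_card[of "map h (filter P xs)"] by (simp add: distinct_map_filter)
  also have "\<dots> \<le> card A"
    using assms(2,3) by (intro card_mono) auto
  finally show ?thesis .
qed

text \<open>The bound holds for every edge set.\<close>

theorem lemma15:
  fixes V :: "'v set" and E :: "'v tedge set" and s :: 'v and ts :: real
  assumes "temporal_graph V E" and "s \<in> V"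
    and "(bfs_step E)\<^sup>*\<^sup>* (bfs_init s ts) st"
    and "v \<in> V"
  shows "length (filter (\<lambda>r. rvx r = v) (queue st)) \<le> 2"
proof -
  have inv: "bfs_inv st" using assms(3) by (rule bfs_inv_reachable)
  then obtain d where "\<forall>r\<in>set (queue st). rlev r = d \<or> rlev r = Suc d"
    by (rule bfs_inv_two_levels)
  then have "\<forall>r\<in>set (queue st). rvx r = v \<longrightarrow> (rvx r, rlev r) \<in> {(v, d), (v, Suc d)}"
    by auto
  moreover have "distinct (map (\<lambda>r. (rvx r, rlev r)) (queue st))"
    using inv by (simp add: bfs_inv_def)
  ultimately have "length (filter (\<lambda>r. rvx r = v) (queue st)) \<le> card {(v, d), (v, Suc d)}"
    by (intro length_filter_le_card) auto
  then show ?thesis by (simp add: card_insert_if)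
qed

end
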